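(* Let $\sqsubset$ be a precedence on a finite signature $\mathcal F$ with rank function $\mathrm{rk}$, and let $(G,l,r)$ be a constructor graph rewrite rule with $G{\restriction}r\sqsubset_{\mathrm{pt}}G{\restriction}l$. Let $G_L\in\mathcal{TG}_{\mathrm{nrm}}(\mathcal F)$ be a closed instance of $G{\restriction}l$ (i.e. a closed term graph with a homomorphism $\psi:G{\restriction}l\to G_L$ mapping $l$ to $\rho_{G_L}$), and let $G_R\in\mathcal{TG}_{\mathrm{nrm}}(\mathcal F)$ be the corresponding closed instance of $G{\restriction}r$ (obtained by instantiating each unlabeled node $x$ of $G{\restriction}r$ with $G_L{\restriction}\psi(x)$, i.e. the result of rewriting $G_L$ at its root with the redex $((G,l,r),\psi)$). If $|G{\restriction}r|\le\ell$ for a positive integer $\ell$, then $\pi_\ell(G_R)<\pi_\ell(G_L)$.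
   Context: Term graphs. $\mathcal F=\mathcal C\cup\mathcal D$ is a finite signature (constructors and defined symbols, disjoint) with arity function $\mathrm{ar}$. A labeled graph consists of a finite acyclic directed graph $(V_G,E_G)$, a partial labeling $\mathrm{lab}_G:V_G\to\mathcal F$ and a successor function $\mathrm{att}_G:V_G\to V_G^*$ such that $\mathrm{att}_G(v)$ has length $\mathrm{ar}(\mathrm{lab}_G(v))$ if $v$ is labeled and is empty otherwise, and the set of entries of $\mathrm{att}_G(v)$ equals $\{u:(v,u)\in E_G\}$. Unlabeled nodes act as variables. A term graph additionally has a root $\rho_G$ from which every node is reachable; $\mathcal{TG}(\mathcal C)$ denotes term graphs whose labeled nodes carry constructors. $G{\restriction}v$ is the sub-term graph of nodes reachable from $v$; $H\subseteq G$ means $H=G{\restriction}v$ for some $v$. $|G|=|V_G|$. $\mathrm{depth}(G)$ is the length of a longest path from $\rho_G$. $G$ is closed if every node is labeled; basic if $\mathrm{lab}_G(\rho_G)\in\mathcal D$ and $G{\restriction}v\in\mathcal{TG}(\mathcal C)$ for every successor $v$ of $\rho_G$. Homomorphisms preserve labels, successor sequences (at labeled nodes only) and the normal/safe split. A graph rewrite rule $(K,l,r)$ is a labeled graph with distinct nodes $l,r$, every unlabeled node of $K{\restriction}r$ lying in $K{\restriction}l$; it is a constructor rule if $K{\restriction}l$ is basic. Argument separation. The argument positions of each $f\in\mathcal F$ are split into normal and safe ones; constructors have only safe positions; nodes with the same label have the same separation. $\mathrm{nrm}(v)$ (resp. $\mathrm{safe}(v)$) is the set of successors of $v$ at normal (resp.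 safe) positions. $H\sqsubset_{\mathrm{nrm}}G$ means $H\subseteq G{\restriction}v$ for some $v\in\mathrm{nrm}(\rho_G)$. Precedence. A precedence $\sqsubset$ is a well-founded strict partial order on $\mathcal F$ with all constructors minimal, with a rank function $\mathrm{rk}:\mathcal F\to\mathbb N$ compatible with it ($g\sqsubset f$ implies $\mathrm{rk}(g)<\mathrm{rk}(f)$). $H\sqsubset_{\mathrm{pt}}G$ holds if $\mathrm{lab}_H(v)\sqsubset\mathrm{lab}_G(\rho_G)$ for every labeled node $v$ of $H$ and either (1) $H=G{\restriction}u$ or $H\sqsubset_{\mathrm{pt}}G{\restriction}u$ for some successor $u$ of $\rho_G$; or (2) $\rho_H$ is labeled, $H{\restriction}v\sqsubset_{\mathrm{nrm}}G$ for each $v\in\mathrm{nrm}(\rho_H)$, and $H{\restriction}v\sqsubset_{\mathrm{pt}}G$ for each $v\in\mathrm{safe}(\rho_H)$. Safe paths and $\mathcal{TG}_{\mathrm{nrm}}$. A path is safe if each next node is a safe successor of the previous one; $\mathrm{SP}_G(v)$ is the set of nodes lying on a safe path from $v$ (including $v$), and $\mathrm{SP}_G=\mathrm{SP}_G(\rho_G)$. $G\in\mathcal{TG}_{\mathrm{nrm}}(\mathcal F)$ iff $G\in\mathcal{TG}(\mathcal C)$, or $G{\restriction}v\in\mathcal{TG}(\mathcal C)$ for all $v\in\mathrm{nrm}(\rho_G)$ and $G{\restriction}v\in\mathcal{TG}_{\mathrm{nrm}}(\mathcal F)$ for all $v\in\mathrm{safe}(\rho_G)$. Interpretation. For a positive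 integer $\ell$ and a closed term graph $G$ with labeled root, let $\mathrm{pj}_\ell(G)=(1+\ell)^{2\,\mathrm{rk}(\mathrm{lab}_G(\rho_G))}\cdot\big(1+\sum_{u\in\mathrm{nrm}(\rho_G)}\mathrm{depth}(G{\restriction}u)\big)$, and for $G\in\mathcal{TG}_{\mathrm{nrm}}(\mathcal F)$ closed let $\pi_\ell(G)=\sum\{\mathrm{pj}_\ell(G{\restriction}v) : v\in\mathrm{SP}_G,\ G{\restriction}v\notin\mathcal{TG}(\mathcal C)\}$ (so $\pi_\ell(G)=0$ if $G\in\mathcal{TG}(\mathcal C)$). *)

theory Defs
  imports Main
begin

text \<open>A signature: constructors, defined symbols, arity, and the set of
  normal argument positions of each symbol (all other positions below the
  arity are safe).\<close>
record 'f sig =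
  cons :: "'f set"
  defs :: "'f set"
  ar   :: "'f \<Rightarrow> nat"
  nrmp :: "'f \<Rightarrow> nat set"

definition syms :: "'f sig \<Rightarrow> 'f set" where
  "syms S = cons S \<union> defs S"

definition wf_sig :: "'f sig \<Rightarrow> bool" where
  "wf_sig S \<longleftrightarrow> finite (syms S) \<and> cons S \<inter> defs S = {}
     \<and> (\<forall>f. nrmp S f \<subseteq> {..<ar S f})
     \<and> (\<forall>c\<in>cons S. nrmp S c = {})"

definition precedence :: "'f sig \<Rightarrow> ('f \<Rightarrow> 'f \<Rightarrow> bool) \<Rightarrow> ('f \<Rightarrow> nat) \<Rightarrow> bool" where
  "precedence S prec rk \<longleftrightarrow>
     (\<forall>f g. prec g f \<longrightarrow> f \<in> syms S \<and> g \<in> syms S)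
   \<and> (\<forall>f. \<not> prec f f)
   \<and> (\<forall>f g h. prec f g \<longrightarrow> prec g h \<longrightarrow> prec f h)
   \<and> wfP prec
   \<and> (\<forall>c\<in>cons S. \<forall>g. \<not> prec g c)
   \<and> (\<forall>f g. prec g f \<longrightarrow> rk g < rk f)"

text \<open>Outside the node set
  the labeling is None and the successor list empty (normal form, so that
  equality of graphs is equality of records).\<close>
record ('v, 'f) lgraph =
  nodes :: "'v set"
  lab   :: "'v \<Rightarrow> 'f option"
  att   :: "'v \<Rightarrow> 'v list"

record ('v, 'f) tgraph = "('v, 'f) lgraph" +
  root :: 'v

definition edges :: "('v, 'f, 'z) lgraph_scheme \<Rightarrow> ('v \<times> 'v) set" where
  "edges G = {(v, u). v \<in> nodes G \<and> u \<in> set (att G v)}"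

definition wf_lgraph :: "'f sig \<Rightarrow> ('v, 'f, 'z) lgraph_scheme \<Rightarrow> bool" where
  "wf_lgraph S G \<longleftrightarrow> finite (nodes G)
     \<and> acyclic (edges G)
     \<and> (\<forall>v\<in>nodes G. set (att G v) \<subseteq> nodes G)
     \<and> (\<forall>v\<in>nodes G. case lab G v of
           None \<Rightarrow> att G v = []
         | Some f \<Rightarrow> f \<in> syms S \<and> length (att G v) = ar S f)
     \<and> (\<forall>v. v \<notin> nodes G \<longrightarrow> lab G v = None \<and> att G v = [])"

definition reach :: "('v, 'f, 'z) lgraph_scheme \<Rightarrow> 'v \<Rightarrow> 'v set" where
  "reach G v = {u. (v, u) \<in> (edges G)\<^sup>*}"

definition wf_tgraph :: "'f sig \<Rightarrow> ('v, 'f) tgraph \<Rightarrow> bool" where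
  "wf_tgraph S G \<longleftrightarrow> wf_lgraph S G \<and> root G \<in> nodes G \<and> nodes G = reach G (root G)"

definition restr :: "('v, 'f, 'z) lgraph_scheme \<Rightarrow> 'v \<Rightarrow> ('v, 'f) tgraph" where
  "restr G v = \<lparr> nodes = reach G v,
                 lab = (\<lambda>u. if u \<in> reach G v then lab G u else None),
                 att = (\<lambda>u. if u \<in> reach G v then att G u else []),
                 root = v \<rparr>"

definition gpath :: "('v, 'f, 'z) lgraph_scheme \<Rightarrow> 'v list \<Rightarrow> bool" where
  "gpath G xs \<longleftrightarrow> xs \<noteq> [] \<and> (\<forall>i. Suc i < length xs \<longrightarrow> (xs ! i, xs ! Suc i) \<in> edges G)"

definition depth :: "('v, 'f) tgraph \<Rightarrow> nat" where
  "depth G = Max {length xs - 1 | xs. gpath G xs \<and> hd xs = root G}"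

definition closed :: "('v, 'f, 'z) lgraph_scheme \<Rightarrow> bool" where
  "closed G \<longleftrightarrow> (\<forall>v\<in>nodes G. lab G v \<noteq> None)"

definition tg_C :: "'f sig \<Rightarrow> ('v, 'f, 'z) lgraph_scheme \<Rightarrow> bool" where
  "tg_C S G \<longleftrightarrow> (\<forall>v\<in>nodes G. \<forall>f. lab G v = Some f \<longrightarrow> f \<in> cons S)"

definition basic :: "'f sig \<Rightarrow> ('v, 'f) tgraph \<Rightarrow> bool" where
  "basic S G \<longleftrightarrow> (\<exists>f\<in>defs S. lab G (root G) = Some f)
     \<and> (\<forall>v\<in>set (att G (root G)). tg_C S (restr G v))"

definition nrm :: "'f sig \<Rightarrow> ('v, 'f, 'z) lgraph_scheme \<Rightarrow> 'v \<Rightarrow> 'v set" where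
  "nrm S G v = {att G v ! i | i. i < length (att G v) \<and> lab G v \<noteq> None
                                 \<and> i \<in> nrmp S (the (lab G v))}"

definition safe :: "'f sig \<Rightarrow> ('v, 'f, 'z) lgraph_scheme \<Rightarrow> 'v \<Rightarrow> 'v set" where
  "safe S G v = {att G v ! i | i. i < length (att G v) \<and> lab G v \<noteq> None
                                 \<and> i \<notin> nrmp S (the (lab G v))}"

definition nrm_sub :: "'f sig \<Rightarrow> ('v, 'f) tgraph \<Rightarrow> ('v, 'f) tgraph \<Rightarrow> bool" where
  "nrm_sub S H G \<longleftrightarrow> (\<exists>v\<in>nrm S G (root G). \<exists>w\<in>nodes (restr G v).
       H = restr (restr G v) w)"

inductive pt :: "'f sig \<Rightarrow> ('f \<Rightarrow> 'f \<Rightarrow> bool) \<Rightarrow> ('v, 'f) tgraph \<Rightarrow> ('v, 'f) tgraph \<Rightarrow> bool"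
  for S prec where
  pt_sub: "\<lbrakk> \<forall>v\<in>nodes H. \<forall>f. lab H v = Some f \<longrightarrow> prec f (the (lab G (root G)));
            u \<in> set (att G (root G));
            H = restr G u \<or> pt S prec H (restr G u) \<rbrakk> \<Longrightarrow> pt S prec H G"
| pt_ctx: "\<lbrakk> \<forall>v\<in>nodes H. \<forall>f. lab H v = Some f \<longrightarrow> prec f (the (lab G (root G)));
            lab H (root H) \<noteq> None;
            \<forall>v\<in>nrm S H (root H). nrm_sub S (restr H v) G;
            \<forall>v\<in>safe S H (root H). pt S prec (restr H v) G \<rbrakk> \<Longrightarrow> pt S prec H G"

inductive tg_nrm :: "'f sig \<Rightarrow> ('v, 'f) tgraph \<Rightarrow> bool" for S where
  nrm_C: "tg_C S G \<Longrightarrow> tg_nrm S G"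
| nrm_step: "\<lbrakk> \<forall>v\<in>nrm S G (root G). tg_C S (restr G v);
              \<forall>v\<in>safe S G (root G). tg_nrm S (restr G v) \<rbrakk> \<Longrightarrow> tg_nrm S G"

definition graph_rule :: "'f sig \<Rightarrow> ('v, 'f) lgraph \<Rightarrow> 'v \<Rightarrow> 'v \<Rightarrow> bool" where
  "graph_rule S K l r \<longleftrightarrow> wf_lgraph S K \<and> l \<in> nodes K \<and> r \<in> nodes K \<and> l \<noteq> r
     \<and> (\<forall>v\<in>reach K r. lab K v = None \<longrightarrow> v \<in> reach K l)"

definition constructor_rule :: "'f sig \<Rightarrow> ('v, 'f) lgraph \<Rightarrow> 'v \<Rightarrow> 'v \<Rightarrow> bool" where
  "constructor_rule S K l r \<longleftrightarrow> graph_rule S K l r \<and> basic S (restr K l)"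

text \<open>Homomorphism of term graphs (preserves root, labels and successor
  lists at labeled nodes; the normal/safe split is preserved automatically
  since it is determined by the label).\<close>
definition is_hom :: "('v, 'f) tgraph \<Rightarrow> ('w, 'f) tgraph \<Rightarrow> ('v \<Rightarrow> 'w) \<Rightarrow> bool" where
  "is_hom H G \<psi> \<longleftrightarrow> (\<forall>v\<in>nodes H. \<psi> v \<in> nodes G) \<and> \<psi> (root H) = root G
     \<and> (\<forall>v\<in>nodes H. lab H v \<noteq> None \<longrightarrow>
            lab G (\<psi> v) = lab H v \<and> att G (\<psi> v) = map \<psi> (att H v))"

text \<open>Result of rewriting G_L at its root with redex ((K,l,r),psi), after
  garbage collection: nodes of K restricted at r that do not lie in K
  restricted at l are fresh (Inl), nodes of K restricted at l are mapped via
  psi into G_L (Inr), in particular every unlabeled node x of K restricted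
  at r is instantiated by G_L restricted at psi x.\<close>
definition rw_root :: "('v, 'f) lgraph \<Rightarrow> 'v \<Rightarrow> 'v \<Rightarrow> ('v \<Rightarrow> 'w) \<Rightarrow> ('w, 'f) tgraph
                        \<Rightarrow> ('v + 'w, 'f) tgraph" where
  "rw_root K l r \<psi> GL =
    (let Ll = reach K l; Rr = reach K r;
         \<phi> = (\<lambda>u. if u \<in> Ll then Inr (\<psi> u) else Inl u);
         H = \<lparr> nodes = Inl ` (Rr - Ll) \<union> Inr ` nodes GL,
               lab = (\<lambda>x. case x of Inl v \<Rightarrow> if v \<in> Rr - Ll then lab K v else None
                                 | Inr w \<Rightarrow> lab GL w),
               att = (\<lambda>x. case x of Inl v \<Rightarrow> if v \<in> Rr - Ll then map \<phi> (att K v) else []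
                                 | Inr w \<Rightarrow> map Inr (att GL w)) \<rparr>
     in restr H (\<phi> r))"

definition pj :: "'f sig \<Rightarrow> ('f \<Rightarrow> nat) \<Rightarrow> nat \<Rightarrow> ('v, 'f) tgraph \<Rightarrow> nat" where
  "pj S rk lv G = (1 + lv) ^ (2 * rk (the (lab G (root G))))
      * (1 + (\<Sum>u\<in>nrm S G (root G). depth (restr G u)))"

definition sedges :: "'f sig \<Rightarrow> ('v, 'f, 'z) lgraph_scheme \<Rightarrow> ('v \<times> 'v) set" where
  "sedges S G = {(v, u). v \<in> nodes G \<and> u \<in> safe S G v}"

definition SP :: "'f sig \<Rightarrow> ('v, 'f, 'z) lgraph_scheme \<Rightarrow> 'v \<Rightarrow> 'v set" where
  "SP S G v = {u. (v, u) \<in> (sedges S G)\<^sup>*}"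

definition interp :: "'f sig \<Rightarrow> ('f \<Rightarrow> nat) \<Rightarrow> nat \<Rightarrow> ('v, 'f) tgraph \<Rightarrow> nat" where
  "interp S rk lv G = (\<Sum>v\<in>{v\<in>SP S G (root G). \<not> tg_C S (restr G v)}. pj S rk lv (restr G v))"

end

theory Submission
  imports Defs
begin

text \<open>A node of the reduct G_R on a safe path from its root is either fresh (a node of
  K restricted to r outside K restricted to l) or shared with G_L.  Shared nodes reached
  this way are non-root nodes of G_L lying on a safe path of G_L or inside a constructor
  graph, so together they contribute at most \<pi>(G_L) - pj(G_L).  For the fresh nodes the
  hypothesis on r propagates along safe edges: each fresh node stays pt-below l, or below
  a variable argument of l.  Hence its symbol has smaller rank than the root symbol f of l,
  and its normal successors lie below normal arguments of l, so their depths are bounded by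
  the sum N of the depths of the normal arguments of the root of G_L.  There are at most
  \<ell> fresh nodes with at most \<ell> normal successors each, so the fresh nodes contribute
  at most \<ell> (1+\<ell>)^(2 rk f - 2) (1 + \<ell> N) < (1+\<ell>)^(2 rk f) (1 + N) = pj(G_L).\<close>

subsection \<open>Reachability and sub-term graphs\<close>

text \<open>The part of well-formedness needed by the lemmas about restr; unlike wf_lgraph it
  is immediate for the graph built by rw_root.\<close>
definition att_empty_outside :: "('v, 'f, 'z) lgraph_scheme \<Rightarrow> bool" where
  "att_empty_outside G \<longleftrightarrow> (\<forall>v. v \<notin> nodes G \<longrightarrow> att G v = [])"

lemma wf_lgraph_att_empty_outside: "wf_lgraph S G \<Longrightarrow> att_empty_outside G"
  by (simp add: wf_lgraph_def att_empty_outside_def)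

lemma reach_refl [simp]: "v \<in> reach G v"
  by (simp add: reach_def)

lemma reach_edge: "a \<in> reach G v \<Longrightarrow> (a, b) \<in> edges G \<Longrightarrow> b \<in> reach G v"
  unfolding reach_def by (auto intro: rtrancl_into_rtrancl)

lemma reach_trans: "a \<in> reach G v \<Longrightarrow> b \<in> reach G a \<Longrightarrow> b \<in> reach G v"
  unfolding reach_def by (auto intro: rtrancl_trans)

lemma reach_subset: "u \<in> reach G v \<Longrightarrow> reach G u \<subseteq> reach G v"
  using reach_trans[of u G v] by auto

lemma att_in_reach: "att_empty_outside G \<Longrightarrow> u \<in> set (att G v) \<Longrightarrow> u \<in> reach G v"
  unfolding att_empty_outside_def reach_def edges_def
  by (metis (mono_tags, lifting) case_prodI empty_iff empty_set mem_Collect_eq r_into_rtrancl)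

lemma reach_subset_nodes:
  assumes "wf_lgraph S G" "v \<in> nodes G"
  shows "reach G v \<subseteq> nodes G"
proof
  fix x assume "x \<in> reach G v"
  then have "(v, x) \<in> (edges G)\<^sup>*" by (simp add: reach_def)
  then show "x \<in> nodes G" using assms
    by (induction rule: rtrancl_induct) (auto simp: edges_def wf_lgraph_def)
qed

lemma nodes_restr [simp]: "nodes (restr G v) = reach G v"
  and root_restr [simp]: "root (restr G v) = v"
  by (simp_all add: restr_def)

lemma lab_restr [simp]: "u \<in> reach G v \<Longrightarrow> lab (restr G v) u = lab G u"
  and att_restr [simp]: "u \<in> reach G v \<Longrightarrow> att (restr G v) u = att G u"
  by (simp_all add: restr_def)

lemma edges_restr:
  "att_empty_outside G \<Longrightarrow> edges (restr G v) = {(a, b). (a, b) \<in> edges G \<and> a \<in> reach G v}"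
  unfolding edges_def restr_def att_empty_outside_def by auto

lemma reach_restr:
  assumes G: "att_empty_outside G" and u: "u \<in> reach G v"
  shows "reach (restr G v) u = reach G u"
proof
  have "edges (restr G v) \<subseteq> edges G"
    using edges_restr[OF G] by auto
  then show "reach (restr G v) u \<subseteq> reach G u"
    unfolding reach_def using rtrancl_mono by blast
next
  have "x \<in> reach G v \<and> (u, x) \<in> (edges (restr G v))\<^sup>*" if "(u, x) \<in> (edges G)\<^sup>*" for x
    using that
  proof (induction rule: rtrancl_induct)
    case base
    then show ?case using u by simp
  next
    case (step y z)
    then have "(y, z) \<in> edges (restr G v)"
      using edges_restr[OF G] by simp
    with step show ?case
      using reach_edge by (meson rtrancl.rtrancl_into_rtrancl)
  qed
  then show "reach G u \<subseteq> reach (restr G v) u"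
    unfolding reach_def by auto
qed

lemma restr_restr:
  assumes "att_empty_outside G" "u \<in> reach G v"
  shows "restr (restr G v) u = restr G u"
proof -
  have "reach (restr G v) u = reach G u" by (rule reach_restr[OF assms])
  then have "restr (restr G v) u = \<lparr>nodes = reach G u,
      lab = \<lambda>w. if w \<in> reach G u then lab (restr G v) w else None,
      att = \<lambda>w. if w \<in> reach G u then att (restr G v) w else [], root = u\<rparr>"
    by (simp only: restr_def[of "restr G v"])
  with reach_subset[OF assms(2)] show ?thesis
    by (auto simp: restr_def[of G] intro!: ext)
qed

lemma tg_C_restr_reach:
  "att_empty_outside G \<Longrightarrow> tg_C S (restr G u) \<Longrightarrow> w \<in> reach G u \<Longrightarrow> tg_C S (restr G w)"
  unfolding tg_C_def using reach_subset by (fastforce simp: restr_def)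

lemma nrm_restr: "u \<in> reach G v \<Longrightarrow> nrm S (restr G v) u = nrm S G u"
  by (simp add: nrm_def)

lemma safe_restr: "u \<in> reach G v \<Longrightarrow> safe S (restr G v) u = safe S G u"
  by (simp add: safe_def)

lemma nrm_subset_att: "nrm S G v \<subseteq> set (att G v)"
  unfolding nrm_def by auto

lemma safe_subset_att: "safe S G v \<subseteq> set (att G v)"
  unfolding safe_def by auto

lemma nrm_in_reach: "att_empty_outside G \<Longrightarrow> u \<in> nrm S G v \<Longrightarrow> u \<in> reach G v"
  using att_in_reach nrm_subset_att by fastforce

lemma safe_in_reach: "att_empty_outside G \<Longrightarrow> u \<in> safe S G v \<Longrightarrow> u \<in> reach G v"
  using att_in_reach safe_subset_att by fastforce

lemma finite_nrm: "finite (nrm S G v)"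
  by (rule finite_subset[OF nrm_subset_att]) simp

lemma set_att_eq_nrm_Un_safe: "lab G v \<noteq> None \<Longrightarrow> set (att G v) = nrm S G v \<union> safe S G v"
  unfolding nrm_def safe_def by (auto simp: in_set_conv_nth) blast

lemma nrm_unlabeled: "lab G v = None \<Longrightarrow> nrm S G v = {}"
  unfolding nrm_def by auto

lemma nrm_eq_image:
  "lab G' x = lab G y \<Longrightarrow> att G' x = map f (att G y) \<Longrightarrow> nrm S G' x = f ` nrm S G y"
  unfolding nrm_def by (force simp: image_iff)

lemma safe_eq_image:
  "lab G' x = lab G y \<Longrightarrow> att G' x = map f (att G y) \<Longrightarrow> safe S G' x = f ` safe S G y"
  unfolding safe_def by (force simp: image_iff)

lemma SP_subset_reach: "SP S G v \<subseteq> reach G v"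
proof -
  have "sedges S G \<subseteq> edges G"
    unfolding sedges_def edges_def using safe_subset_att by fastforce
  then have "(sedges S G)\<^sup>* \<subseteq> (edges G)\<^sup>*"
    by (rule rtrancl_mono)
  then show ?thesis
    unfolding SP_def reach_def by auto
qed

definition active_nodes :: "'f sig \<Rightarrow> ('v, 'f) tgraph \<Rightarrow> 'v set" where
  "active_nodes S G = {v \<in> SP S G (root G). \<not> tg_C S (restr G v)}"

lemma interp_eq_sum_active:
  "interp S rk lv G = (\<Sum>v\<in>active_nodes S G. pj S rk lv (restr G v))"
  by (simp add: interp_def active_nodes_def)

lemma pt_lab_prec:
  "pt S prec H G \<Longrightarrow> v \<in> nodes H \<Longrightarrow> lab H v = Some g \<Longrightarrow> prec g (the (lab G (root G)))"
  by (erule pt.cases) auto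

definition height :: "('v, 'f, 'z) lgraph_scheme \<Rightarrow> 'v \<Rightarrow> nat" where
  "height G v = Max {length xs - 1 | xs. gpath G xs \<and> hd xs = v}"

lemma gpath_nth_reach:
  assumes "gpath G xs" "hd xs = v"
  shows "i < length xs \<Longrightarrow> xs ! i \<in> reach G v"
proof (induction i)
  case 0
  then show ?case using assms by (simp add: gpath_def hd_conv_nth)
next
  case (Suc i)
  then have "(xs ! i, xs ! Suc i) \<in> edges G"
    using assms(1) unfolding gpath_def by auto
  with Suc show ?case
    using reach_edge by (metis Suc_lessD)
qed

lemma gpath_restr:
  assumes G: "att_empty_outside G" and "hd xs = v"
  shows "gpath (restr G v) xs \<longleftrightarrow> gpath G xs"
proof
  assume "gpath (restr G v) xs"
  then show "gpath G xs"
    using edges_restr[OF G] unfolding gpath_def by auto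
next
  assume xs: "gpath G xs"
  show "gpath (restr G v) xs"
    unfolding gpath_def
  proof (intro conjI allI impI)
    show "xs \<noteq> []" using xs gpath_def by auto
    fix i assume i: "Suc i < length xs"
    have "xs ! i \<in> reach G v"
      using gpath_nth_reach[OF xs assms(2), of i] i by auto
    then show "(xs ! i, xs ! Suc i) \<in> edges (restr G v)"
      using xs i edges_restr[OF G] unfolding gpath_def by auto
  qed
qed

lemma depth_restr_eq_height: "att_empty_outside G \<Longrightarrow> depth (restr G v) = height G v"
  unfolding depth_def height_def by (rule arg_cong[where f = Max]) (auto simp: gpath_restr)

lemma gpath_trancl:
  assumes "gpath G xs"
  shows "j < length xs \<Longrightarrow> i < j \<Longrightarrow> (xs ! i, xs ! j) \<in> (edges G)\<^sup>+"
proof (induction j)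
  case 0
  then show ?case by simp
next
  case (Suc j)
  have "(xs ! j, xs ! Suc j) \<in> edges G"
    using assms Suc.prems unfolding gpath_def by auto
  with Suc show ?case
    by (cases "i = j") (auto intro: trancl_into_trancl)
qed

lemma gpath_distinct:
  assumes "acyclic (edges G)" "gpath G xs"
  shows "distinct xs"
  unfolding distinct_conv_nth
proof (intro allI impI)
  fix i j assume ij: "i < length xs" "j < length xs" "i \<noteq> j"
  have "(xs ! min i j, xs ! max i j) \<in> (edges G)\<^sup>+"
    using gpath_trancl[OF assms(2)] ij by (simp add: max_def min_def)
  then show "xs ! i \<noteq> xs ! j"
    using assms(1) ij(3) unfolding acyclic_def by (auto simp: max_def min_def split: if_splits)
qed

lemma gpath_length_le_card:
  assumes G: "wf_lgraph S G" and xs: "gpath G xs"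
  shows "length xs - 1 \<le> card (nodes G)"
proof -
  have "set (tl xs) \<subseteq> nodes G"
  proof
    fix x assume "x \<in> set (tl xs)"
    then obtain k where "k < length (tl xs)" "x = tl xs ! k"
      by (metis in_set_conv_nth)
    then have "Suc k < length xs" "x = xs ! Suc k"
      by (auto simp: nth_tl)
    then have "(xs ! k, x) \<in> edges G" using xs unfolding gpath_def by auto
    then show "x \<in> nodes G" using G unfolding edges_def wf_lgraph_def by auto
  qed
  moreover have "distinct (tl xs)"
    using gpath_distinct G xs distinct_tl unfolding wf_lgraph_def by metis
  moreover have "finite (nodes G)" using G wf_lgraph_def by auto
  ultimately show ?thesis
    by (metis card_mono distinct_card length_tl)
qed

lemma finite_path_lengths:
  "wf_lgraph S G \<Longrightarrow> finite {length xs - 1 | xs. gpath G xs \<and> hd xs = v}"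
  by (rule finite_subset[of _ "{..card (nodes G)}"]) (auto dest: gpath_length_le_card)

lemma height_edge_le:
  assumes G: "wf_lgraph S G" and ab: "(a, b) \<in> edges G"
  shows "height G b \<le> height G a"
proof -
  have "{length xs - 1 | xs. gpath G xs \<and> hd xs = b} \<noteq> {}"
    using gpath_def[of G "[b]"] by fastforce
  then have "height G b \<in> {length xs - 1 | xs. gpath G xs \<and> hd xs = b}"
    unfolding height_def by (rule Max_in[OF finite_path_lengths[OF G]])
  then obtain ys where ys: "gpath G ys" "hd ys = b" "height G b = length ys - 1"
    by auto
  have "gpath G (a # ys)"
    unfolding gpath_def
  proof (intro conjI allI impI)
    fix i assume i: "Suc i < length (a # ys)"
    show "((a # ys) ! i, (a # ys) ! Suc i) \<in> edges G"
    proof (cases i)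
      case 0
      with ys ab show ?thesis by (auto simp: gpath_def hd_conv_nth)
    next
      case (Suc k)
      with ys i show ?thesis by (auto simp: gpath_def)
    qed
  qed simp
  then have "length (a # ys) - 1 \<in> {length xs - 1 | xs. gpath G xs \<and> hd xs = a}"
    by force
  then have "length (a # ys) - 1 \<le> height G a"
    unfolding height_def by (rule Max_ge[OF finite_path_lengths[OF G]])
  with ys show ?thesis by simp
qed

lemma height_reach_le:
  assumes G: "wf_lgraph S G" and "b \<in> reach G a"
  shows "height G b \<le> height G a"
proof -
  have "(a, b) \<in> (edges G)\<^sup>*" using assms(2) by (simp add: reach_def)
  then show ?thesis
    by (induction rule: rtrancl_induct) (use height_edge_le[OF G] in fastforce)+
qed

definition right_copy :: "('u + 'w, 'f, 'z) lgraph_scheme \<Rightarrow> ('w, 'f, 'y) lgraph_scheme \<Rightarrow> bool" where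
  "right_copy H G \<longleftrightarrow> (\<forall>a z. (Inr a, z) \<in> edges H \<longleftrightarrow> (\<exists>b. z = Inr b \<and> (a, b) \<in> edges G))"

lemma right_copy_gpath_Inr:
  assumes H: "right_copy H G" and xs: "gpath H xs" "hd xs = Inr w"
  shows "xs = map Inr (map projr xs)"
proof -
  have "\<exists>b. xs ! i = Inr b" if "i < length xs" for i
    using that
  proof (induction i)
    case 0
    then show ?case using xs by (auto simp: gpath_def hd_conv_nth)
  next
    case (Suc i)
    then obtain b where "xs ! i = Inr b" by auto
    moreover have "(xs ! i, xs ! Suc i) \<in> edges H"
      using xs Suc.prems gpath_def by auto
    ultimately show ?case using H unfolding right_copy_def by auto
  qed
  then show ?thesis
    by (intro nth_equalityI) (auto, metis sum.sel(2))
qed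

lemma right_copy_path_lengths:
  assumes H: "right_copy H G"
  shows "{length xs - 1 | xs. gpath H xs \<and> hd xs = Inr w}
       = {length ys - 1 | ys. gpath G ys \<and> hd ys = w}"
proof (intro set_eqI iffI)
  fix n assume "n \<in> {length xs - 1 | xs. gpath H xs \<and> hd xs = Inr w}"
  then obtain xs where xs: "gpath H xs" "hd xs = Inr w" "n = length xs - 1"
    by auto
  define ys where "ys = map projr xs"
  have xs_ys: "xs = map Inr ys"
    unfolding ys_def using right_copy_gpath_Inr[OF H xs(1,2)] .
  have "gpath G ys"
    using xs(1) H unfolding xs_ys gpath_def right_copy_def by auto
  moreover have "hd ys = w"
    using xs(1,2) unfolding xs_ys gpath_def by (cases ys) auto
  ultimately show "n \<in> {length ys - 1 | ys. gpath G ys \<and> hd ys = w}"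
    using xs(3) xs_ys by auto
next
  fix n assume "n \<in> {length ys - 1 | ys. gpath G ys \<and> hd ys = w}"
  then obtain ys where ys: "gpath G ys" "hd ys = w" "n = length ys - 1"
    by auto
  have "gpath H (map Inr ys)"
    using ys(1) H unfolding gpath_def right_copy_def by auto
  moreover have "hd (map Inr ys) = Inr w"
    using ys gpath_def by (cases ys) auto
  ultimately show "n \<in> {length xs - 1 | xs. gpath H xs \<and> hd xs = Inr w}"
    using ys(3) by force
qed

lemma right_copy_height: "right_copy H G \<Longrightarrow> height H (Inr w) = height G w"
  unfolding height_def using right_copy_path_lengths[of H G w] by simp

lemma right_copy_reach:
  fixes H :: "('u + 'w, 'f, 'z) lgraph_scheme" and G :: "('w, 'f, 'y) lgraph_scheme"
  assumes H: "right_copy H G"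
  shows "reach H (Inr w) = Inr ` reach G w"
proof (intro set_eqI iffI)
  fix z :: "'u + 'w" assume "z \<in> reach H (Inr w)"
  then have "(Inr w, z) \<in> (edges H)\<^sup>*" by (simp add: reach_def)
  then have "\<exists>b. z = Inr b \<and> (w, b) \<in> (edges G)\<^sup>*"
    using H unfolding right_copy_def
    by (induction rule: rtrancl_induct) (auto intro: rtrancl_into_rtrancl)
  then show "z \<in> Inr ` reach G w" by (auto simp: reach_def)
next
  fix z :: "'u + 'w" assume "z \<in> Inr ` reach G w"
  then obtain b where b: "z = Inr b" "(w, b) \<in> (edges G)\<^sup>*"
    by (auto simp: reach_def)
  from b(2) have "(Inr w, Inr b) \<in> (edges H)\<^sup>*"
    using H unfolding right_copy_def
    by (induction rule: rtrancl_induct) (auto intro: rtrancl_into_rtrancl)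
  then show "z \<in> reach H (Inr w)" using b by (simp add: reach_def)
qed

subsection \<open>Rewriting a closed instance at its root\<close>

locale root_rewrite =
  fixes S :: "'f sig" and prec :: "'f \<Rightarrow> 'f \<Rightarrow> bool" and rk :: "'f \<Rightarrow> nat"
    and K :: "('v, 'f) lgraph" and l r :: 'v
    and GL :: "('w, 'f) tgraph" and \<psi> :: "'v \<Rightarrow> 'w" and lv :: nat
  assumes wf_sig: "wf_sig S"
    and precedence: "precedence S prec rk"
    and constructor_rule: "constructor_rule S K l r"
    and pt_rhs_lhs: "pt S prec (restr K r) (restr K l)"
    and wf_GL: "wf_tgraph S GL"
    and tg_nrm_GL: "tg_nrm S GL"
    and hom: "is_hom (restr K l) GL \<psi>"
    and card_rhs: "card (nodes (restr K r)) \<le> lv"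
begin

lemma wf_K: "wf_lgraph S K"
  and l_node: "l \<in> nodes K"
  and r_node: "r \<in> nodes K"
  and unlabeled_rhs_in_lhs: "v \<in> reach K r \<Longrightarrow> lab K v = None \<Longrightarrow> v \<in> reach K l"
  and basic_lhs: "basic S (restr K l)"
  using constructor_rule by (auto simp: constructor_rule_def graph_rule_def)

lemma att_K: "att_empty_outside K"
  using wf_K by (rule wf_lgraph_att_empty_outside)

lemma wf_lgraph_GL: "wf_lgraph S GL"
  and root_GL: "root GL \<in> nodes GL"
  and nodes_GL: "nodes GL = reach GL (root GL)"
  using wf_GL by (simp_all add: wf_tgraph_def)

lemma att_GL: "att_empty_outside GL"
  using wf_lgraph_GL by (rule wf_lgraph_att_empty_outside)

lemma finite_nodes_GL: "finite (nodes GL)"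
  and acyclic_GL: "acyclic (edges GL)"
  using wf_lgraph_GL by (simp_all add: wf_lgraph_def)

lemma finite_reach_r: "finite (reach K r)"
  using reach_subset_nodes[OF wf_K r_node] wf_K finite_subset
  unfolding wf_lgraph_def by blast

lemma cons_nrmp: "c \<in> cons S \<Longrightarrow> nrmp S c = {}"
  and cons_not_defs: "c \<in> cons S \<Longrightarrow> c \<notin> defs S"
  using wf_sig by (auto simp: wf_sig_def)

lemma not_prec_cons: "c \<in> cons S \<Longrightarrow> \<not> prec g c"
  and prec_irrefl: "\<not> prec g g"
  and prec_rk: "prec g f \<Longrightarrow> rk g < rk f"
  using precedence by (simp_all add: precedence_def)

definition f_root :: 'f where
  "f_root = the (lab K l)"

lemma lab_l: "lab K l = Some f_root"
  and f_root_defs: "f_root \<in> defs S"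
  using basic_lhs unfolding basic_def f_root_def by auto

lemma lhs_args_constructor: "u \<in> set (att K l) \<Longrightarrow> tg_C S (restr K u)"
  using basic_lhs restr_restr[OF att_K att_in_reach[OF att_K]] by (auto simp: basic_def)

lemma rhs_lab_prec: "y \<in> reach K r \<Longrightarrow> lab K y = Some g \<Longrightarrow> prec g f_root"
  using pt_lab_prec[OF pt_rhs_lhs, of y g] lab_l by simp

lemma l_notin_reach_r: "l \<notin> reach K r"
  using rhs_lab_prec[of l f_root] lab_l prec_irrefl by blast

lemma psi_l: "\<psi> l = root GL"
  using hom by (simp add: is_hom_def)

lemma hom_node: "x \<in> reach K l \<Longrightarrow> \<psi> x \<in> nodes GL"
  using hom by (simp add: is_hom_def)

lemma hom_lab_att:
  "x \<in> reach K l \<Longrightarrow> lab K x \<noteq> None \<Longrightarrow> lab GL (\<psi> x) = lab K x \<and> att GL (\<psi> x) = map \<psi> (att K x)"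
  using hom by (simp add: is_hom_def)

lemma lab_GL_root: "lab GL (root GL) = Some f_root"
  using hom_lab_att[of l] lab_l psi_l by simp

lemma hom_edge:
  assumes "x \<in> reach K l" "(x, y) \<in> edges K"
  shows "(\<psi> x, \<psi> y) \<in> edges GL"
proof -
  have "lab K x \<noteq> None"
    using wf_K assms(2) unfolding edges_def wf_lgraph_def by (fastforce split: option.splits)
  then show ?thesis
    using assms hom_lab_att[of x] hom_node[of x] by (auto simp: edges_def)
qed

lemma hom_rtrancl:
  assumes x: "x \<in> reach K l" and "(x, y) \<in> (edges K)\<^sup>*"
  shows "(\<psi> x, \<psi> y) \<in> (edges GL)\<^sup>*"
  using assms(2)
proof (induction rule: rtrancl_induct)
  case base
  then show ?case by simp
next
  case (step y z)
  then have "y \<in> reach K l"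
    using reach_trans[OF x] by (simp add: reach_def)
  with step show ?case
    using hom_edge by (meson rtrancl.rtrancl_into_rtrancl)
qed

lemma nrm_root_GL: "nrm S GL (root GL) = \<psi> ` nrm S K l"
  and safe_root_GL: "safe S GL (root GL) = \<psi> ` safe S K l"
  using hom_lab_att[of l] lab_l psi_l by (auto intro!: nrm_eq_image safe_eq_image)

lemma not_tg_C_GL: "\<not> tg_C S (restr GL (root GL))"
  using root_GL lab_GL_root cons_not_defs f_root_defs unfolding tg_C_def by force

lemma tg_C_nrm_root_GL: "v \<in> nrm S GL (root GL) \<Longrightarrow> tg_C S (restr GL v)"
  using tg_nrm_GL not_tg_C_GL nodes_GL
  by (cases rule: tg_nrm.cases) (auto simp: tg_C_def)

definition shared_inv :: "'w \<Rightarrow> bool" where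
  "shared_inv w \<longleftrightarrow> w \<in> nodes GL \<and> w \<noteq> root GL
     \<and> (tg_C S (restr GL w) \<or> w \<in> SP S GL (root GL))"

lemma constructor_arg_safe_path:
  assumes u: "u \<in> set (att K l)" and uv: "(u, v) \<in> (edges K)\<^sup>*"
  shows "(\<psi> u, \<psi> v) \<in> (sedges S GL)\<^sup>*"
  using uv
proof (induction rule: rtrancl_induct)
  case base
  then show ?case by simp
next
  case (step y z)
  have ul: "u \<in> reach K l" using att_in_reach[OF att_K u] .
  have yu: "y \<in> reach K u" using step(1) by (simp add: reach_def)
  have yl: "y \<in> reach K l" using reach_trans[OF ul yu] .
  obtain c where c: "lab K y = Some c"
    using wf_K step(2) unfolding edges_def wf_lgraph_def by (fastforce split: option.splits)
  have "c \<in> cons S"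
    using lhs_args_constructor[OF u] yu c unfolding tg_C_def by auto
  then have "z \<in> safe S K y"
    using step(2) c cons_nrmp unfolding safe_def edges_def by (auto simp: in_set_conv_nth)
  moreover have "safe S GL (\<psi> y) = \<psi> ` safe S K y"
    using hom_lab_att[OF yl] c by (auto intro!: safe_eq_image)
  ultimately have "(\<psi> y, \<psi> z) \<in> sedges S GL"
    using hom_node[OF yl] by (auto simp: sedges_def)
  with step(3) show ?case
    by (meson rtrancl.rtrancl_into_rtrancl)
qed

lemma shared_inv_lhs:
  assumes v: "v \<in> reach K l" "v \<noteq> l"
  shows "shared_inv (\<psi> v)"
proof -
  from v obtain u where lu: "(l, u) \<in> edges K" and uv: "(u, v) \<in> (edges K)\<^sup>*"
    by (auto simp: reach_def elim: converse_rtranclE)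
  have u: "u \<in> set (att K l)" using lu by (simp add: edges_def)
  have ul: "u \<in> reach K l" using att_in_reach[OF att_K u] .
  have e1: "(root GL, \<psi> u) \<in> edges GL" using hom_edge[OF _ lu] psi_l by simp
  have e2: "(\<psi> u, \<psi> v) \<in> (edges GL)\<^sup>*" using hom_rtrancl[OF ul uv] .
  have "\<psi> v \<noteq> root GL"
  proof
    assume "\<psi> v = root GL"
    with e1 e2 have "(root GL, root GL) \<in> (edges GL)\<^sup>+" by simp
    then show False using acyclic_GL by (simp add: acyclic_def)
  qed
  moreover have "tg_C S (restr GL (\<psi> v)) \<or> \<psi> v \<in> SP S GL (root GL)"
  proof (cases "u \<in> nrm S K l")
    case True
    then have "tg_C S (restr GL (\<psi> u))" using tg_C_nrm_root_GL nrm_root_GL by auto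
    then show ?thesis
      using tg_C_restr_reach[OF att_GL] e2 by (simp add: reach_def)
  next
    case False
    then have "u \<in> safe S K l" using set_att_eq_nrm_Un_safe[of K l S] lab_l u by auto
    then have "(root GL, \<psi> u) \<in> sedges S GL"
      using safe_root_GL root_GL by (auto simp: sedges_def)
    then have "(root GL, \<psi> v) \<in> (sedges S GL)\<^sup>*"
      using constructor_arg_safe_path[OF u uv] by (rule converse_rtrancl_into_rtrancl)
    then show ?thesis by (simp add: SP_def)
  qed
  ultimately show ?thesis
    using hom_node[OF v(1)] by (simp add: shared_inv_def)
qed

definition \<phi> :: "'v \<Rightarrow> 'v + 'w" where
  "\<phi> u = (if u \<in> reach K l then Inr (\<psi> u) else Inl u)"

definition H :: "('v + 'w, 'f) lgraph" where
  "H = \<lparr> nodes = Inl ` (reach K r - reach K l) \<union> Inr ` nodes GL,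
         lab = (\<lambda>x. case x of Inl v \<Rightarrow> if v \<in> reach K r - reach K l then lab K v else None
                           | Inr w \<Rightarrow> lab GL w),
         att = (\<lambda>x. case x of Inl v \<Rightarrow> if v \<in> reach K r - reach K l then map \<phi> (att K v) else []
                           | Inr w \<Rightarrow> map Inr (att GL w)) \<rparr>"

lemma rw_root_eq: "rw_root K l r \<psi> GL = restr H (\<phi> r)"
  unfolding rw_root_def Let_def H_def \<phi>_def by simp

lemma H_Inl:
  "y \<in> reach K r \<Longrightarrow> y \<notin> reach K l \<Longrightarrow> lab H (Inl y) = lab K y \<and> att H (Inl y) = map \<phi> (att K y)"
  by (simp add: H_def)

lemma lab_H_Inr [simp]: "lab H (Inr w) = lab GL w"
  and att_H_Inr [simp]: "att H (Inr w) = map Inr (att GL w)"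
  by (simp_all add: H_def)

lemma att_H: "att_empty_outside H"
  using att_GL unfolding att_empty_outside_def H_def by (auto split: sum.splits)

lemma right_copy_H: "right_copy H GL"
  unfolding right_copy_def edges_def by (auto simp: H_def)

lemma reach_H_Inr: "reach H (Inr w) = Inr ` reach GL w"
  by (rule right_copy_reach[OF right_copy_H])

lemma depth_H_Inr: "depth (restr H (Inr w)) = depth (restr GL w)"
  by (simp add: depth_restr_eq_height att_H att_GL right_copy_height[OF right_copy_H])

lemma tg_C_H_Inr: "tg_C S (restr H (Inr w)) \<longleftrightarrow> tg_C S (restr GL w)"
  unfolding tg_C_def using reach_H_Inr by (auto simp: restr_def)

lemma pj_H_Inr: "pj S rk lv (restr H (Inr w)) = pj S rk lv (restr GL w)"
proof -
  have nrm_Inr: "nrm S (restr H (Inr w)) (Inr w) = Inr ` nrm S GL w"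
    using nrm_restr[of "Inr w" H] nrm_eq_image[of H "Inr w" GL w Inr] by simp
  have "depth (restr (restr H (Inr w)) (Inr b)) = depth (restr (restr GL w) b)"
    if "b \<in> nrm S GL w" for b
  proof -
    have b: "b \<in> reach GL w" using nrm_in_reach[OF att_GL that] .
    then have "restr (restr H (Inr w)) (Inr b) = restr H (Inr b)"
      using restr_restr[OF att_H] reach_H_Inr by simp
    then show ?thesis
      using restr_restr[OF att_GL b] depth_H_Inr by simp
  qed
  then have "(\<Sum>a\<in>Inr ` nrm S GL w. depth (restr (restr H (Inr w)) a))
           = (\<Sum>b\<in>nrm S GL w. depth (restr (restr GL w) b))"
    by (simp add: sum.reindex)
  then show ?thesis
    unfolding pj_def using nrm_Inr nrm_restr[of w GL w] by simp
qed

subsubsection \<open>Safe paths in the reduct\<close>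

text \<open>The part of the hypothesis on r that survives along safe edges.\<close>
definition fresh_inv :: "'v \<Rightarrow> bool" where
  "fresh_inv y \<longleftrightarrow> y \<in> reach K r \<and> y \<notin> reach K l
     \<and> (pt S prec (restr K y) (restr K l)
        \<or> (\<exists>u\<in>set (att K l). lab K u = None \<and> pt S prec (restr K y) (restr K u)))"

lemma fresh_labeled: "y \<in> reach K r \<Longrightarrow> y \<notin> reach K l \<Longrightarrow> \<exists>g. lab K y = Some g"
  using unlabeled_rhs_in_lhs by (cases "lab K y") auto

lemma pt_safe_succs:
  assumes "\<forall>v\<in>safe S (restr K y) y. pt S prec (restr (restr K y) v) G"
  shows "\<forall>y'\<in>safe S K y. pt S prec (restr K y') G"
  using assms safe_restr[of y K y] restr_restr[OF att_K safe_in_reach[OF att_K]] by auto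

lemma pt_below_var_arg:
  assumes u: "u \<in> set (att K l)" "lab K u = None" and pt: "pt S prec (restr K y) (restr K u)"
  shows "nrm S K y = {} \<and> (\<forall>y'\<in>safe S K y. pt S prec (restr K y') (restr K u))"
  using pt
proof (cases rule: pt.cases)
  case (pt_sub u')
  have "u \<in> nodes K"
    using u(1) wf_K l_node unfolding wf_lgraph_def by auto
  then have "att K u = []"
    using u(2) wf_K unfolding wf_lgraph_def by force
  with pt_sub(2) show ?thesis by simp
next
  case pt_ctx
  have "nrm S (restr K u) u = {}"
    using nrm_unlabeled[of K u] u(2) nrm_restr[of u K u] by simp
  then have "nrm S K y = {}"
    using pt_ctx(3) nrm_restr[of y K y] unfolding nrm_sub_def by auto
  with pt_ctx(4) show ?thesis
    using pt_safe_succs by simp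
qed

lemma pt_below_lhs:
  assumes y: "y \<in> reach K r" "y \<notin> reach K l" and pt: "pt S prec (restr K y) (restr K l)"
  shows "(\<exists>u\<in>set (att K l). lab K u = None \<and> pt S prec (restr K y) (restr K u))
       \<or> ((\<forall>a\<in>nrm S K y. \<exists>v\<in>nrm S K l. a \<in> reach K v)
          \<and> (\<forall>y'\<in>safe S K y. pt S prec (restr K y') (restr K l)))"
  using pt
proof (cases rule: pt.cases)
  case (pt_sub u)
  have u: "u \<in> set (att K l)" using pt_sub(2) by simp
  have ul: "u \<in> reach K l" using att_in_reach[OF att_K u] .
  have "y \<noteq> u" using ul y by auto
  then have "restr K y \<noteq> restr K u" by (metis root_restr)
  then have pt_u: "pt S prec (restr K y) (restr K u)"
    using pt_sub(3) restr_restr[OF att_K ul] by simp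
  obtain g where g: "lab K y = Some g" using fresh_labeled[OF y] by blast
  have g_u: "prec g (the (lab K u))" using pt_lab_prec[OF pt_u, of y g] g by simp
  have "lab K u = None"
  proof (rule ccontr)
    assume "lab K u \<noteq> None"
    then obtain c where c: "lab K u = Some c" by auto
    then have "c \<in> cons S"
      using lhs_args_constructor[OF u] unfolding tg_C_def by auto
    with g_u c show False using not_prec_cons by simp
  qed
  with u pt_u show ?thesis by blast
next
  case pt_ctx
  have "\<exists>v\<in>nrm S K l. a \<in> reach K v" if a: "a \<in> nrm S K y" for a
  proof -
    have "nrm_sub S (restr (restr K y) a) (restr K l)"
      using pt_ctx(3) a nrm_restr[of y K y] by auto
    then obtain v w where v: "v \<in> nrm S K l" and w: "w \<in> reach (restr K l) v"
      and eq: "restr (restr K y) a = restr (restr (restr K l) v) w"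
      using nrm_restr[of l K l] unfolding nrm_sub_def by auto
    have "a = w" using arg_cong[OF eq, of root] by simp
    moreover have "w \<in> reach K v"
      using w reach_restr[OF att_K nrm_in_reach[OF att_K v]] by simp
    ultimately show ?thesis using v by blast
  qed
  moreover have "\<forall>y'\<in>safe S K y. pt S prec (restr K y') (restr K l)"
    using pt_ctx(4) pt_safe_succs[of y] by simp
  ultimately show ?thesis by blast
qed

lemma fresh_inv_nrm: "fresh_inv y \<Longrightarrow> a \<in> nrm S K y \<Longrightarrow> \<exists>v\<in>nrm S K l. a \<in> reach K v"
  unfolding fresh_inv_def using pt_below_lhs pt_below_var_arg by fastforce

lemma fresh_inv_safe:
  assumes inv: "fresh_inv y" and y': "y' \<in> safe S K y" "y' \<notin> reach K l"
  shows "fresh_inv y'"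
proof -
  have y: "y \<in> reach K r" "y \<notin> reach K l" using inv fresh_inv_def by auto
  have "pt S prec (restr K y') (restr K l)
      \<or> (\<exists>u\<in>set (att K l). lab K u = None \<and> pt S prec (restr K y') (restr K u))"
    using inv y'(1) pt_below_lhs[OF y] pt_below_var_arg unfolding fresh_inv_def by metis
  moreover have "y' \<in> reach K r"
    using reach_trans[OF y(1) safe_in_reach[OF att_K y'(1)]] .
  ultimately show ?thesis using y'(2) by (simp add: fresh_inv_def)
qed

lemma shared_inv_safe:
  assumes w: "shared_inv w" and w': "w' \<in> safe S GL w"
  shows "shared_inv w'"
proof -
  have w_node: "w \<in> nodes GL" using w shared_inv_def by simp
  have w'_att: "w' \<in> set (att GL w)" using w' safe_subset_att by fastforce
  have edge: "(w, w') \<in> edges GL" using w_node w'_att by (simp add: edges_def)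
  have "w' \<in> nodes GL" using w_node w'_att wf_lgraph_GL unfolding wf_lgraph_def by auto
  moreover have "w' \<noteq> root GL"
  proof
    assume "w' = root GL"
    moreover have "(root GL, w) \<in> (edges GL)\<^sup>*" using w_node nodes_GL by (simp add: reach_def)
    ultimately have "(root GL, root GL) \<in> (edges GL)\<^sup>+" using edge by simp
    then show False using acyclic_GL by (simp add: acyclic_def)
  qed
  moreover have "tg_C S (restr GL w') \<or> w' \<in> SP S GL (root GL)"
  proof (cases "tg_C S (restr GL w)")
    case True
    then show ?thesis
      using tg_C_restr_reach[OF att_GL _ att_in_reach[OF att_GL w'_att]] by blast
  next
    case False
    then have "w \<in> SP S GL (root GL)" using w shared_inv_def by simp
    moreover have "(w, w') \<in> sedges S GL" using w_node w' by (simp add: sedges_def)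
    ultimately show ?thesis by (simp add: SP_def rtrancl_into_rtrancl)
  qed
  ultimately show ?thesis by (simp add: shared_inv_def)
qed

lemma inv_\<phi>:
  assumes "y \<in> reach K r" "y \<notin> reach K l \<Longrightarrow> fresh_inv y"
  shows "case_sum fresh_inv shared_inv (\<phi> y)"
proof (cases "y \<in> reach K l")
  case True
  moreover have "y \<noteq> l" using assms(1) l_notin_reach_r by auto
  ultimately show ?thesis using shared_inv_lhs by (simp add: \<phi>_def)
next
  case False
  with assms(2) show ?thesis by (simp add: \<phi>_def)
qed

lemma inv_safe_H:
  assumes x: "case_sum fresh_inv shared_inv x" and z: "z \<in> safe S H x"
  shows "case_sum fresh_inv shared_inv z"
proof (cases x)
  case (Inl a)
  then have inv: "fresh_inv a" using x by simp
  then have a: "a \<in> reach K r" "a \<notin> reach K l" by (auto simp: fresh_inv_def)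
  have "safe S H (Inl a) = \<phi> ` safe S K a"
    using H_Inl[OF a] by (auto intro!: safe_eq_image)
  then obtain a' where a': "a' \<in> safe S K a" "z = \<phi> a'" using z Inl by auto
  have "a' \<in> reach K r" using reach_trans[OF a(1) safe_in_reach[OF att_K a'(1)]] .
  then show ?thesis using inv_\<phi> fresh_inv_safe[OF inv a'(1)] a'(2) by simp
next
  case (Inr w)
  have "safe S H (Inr w) = Inr ` safe S GL w" by (auto intro!: safe_eq_image)
  then obtain w' where "w' \<in> safe S GL w" "z = Inr w'" using z Inr by auto
  then show ?thesis using shared_inv_safe x Inr by simp
qed

lemma SP_reduct:
  assumes "x \<in> SP S (restr H (\<phi> r)) (\<phi> r)"
  shows "x \<in> reach H (\<phi> r) \<and> case_sum fresh_inv shared_inv x"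
proof -
  have "(\<phi> r, x) \<in> (sedges S (restr H (\<phi> r)))\<^sup>*" using assms by (simp add: SP_def)
  then show ?thesis
  proof (induction rule: rtrancl_induct)
    case base
    have "r \<notin> reach K l \<Longrightarrow> fresh_inv r" using pt_rhs_lhs by (simp add: fresh_inv_def)
    then show ?case using inv_\<phi>[of r] by simp
  next
    case (step y z)
    then have y: "y \<in> reach H (\<phi> r)" and z: "z \<in> safe S H y"
      using safe_restr[of y H "\<phi> r"] by (auto simp: sedges_def)
    then have "z \<in> reach H (\<phi> r)"
      using reach_trans[OF y safe_in_reach[OF att_H z]] by simp
    with step.IH z show ?case using inv_safe_H by blast
  qed
qed

subsubsection \<open>Comparing the interpretations\<close>

definition root_nrm_depth :: nat where
  "root_nrm_depth = (\<Sum>u\<in>nrm S GL (root GL). depth (restr GL u))"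

lemma pj_root_GL: "pj S rk lv (restr GL (root GL)) = (1 + lv) ^ (2 * rk f_root) * (1 + root_nrm_depth)"
proof -
  have "depth (restr (restr GL (root GL)) u) = depth (restr GL u)" if "u \<in> nrm S GL (root GL)" for u
    using restr_restr[OF att_GL nrm_in_reach[OF att_GL that]] by simp
  then show ?thesis
    unfolding pj_def root_nrm_depth_def using nrm_restr[of "root GL" GL] lab_GL_root by simp
qed

text \<open>A normal successor of a fresh node lies below a normal argument of l, whose image
  under \<psi> is a normal argument of the root of GL.\<close>
lemma depth_fresh_nrm_le:
  assumes inv: "fresh_inv y" and a: "a \<in> nrm S K y"
  shows "depth (restr H (\<phi> a)) \<le> root_nrm_depth"
proof -
  obtain v where v: "v \<in> nrm S K l" "a \<in> reach K v" using fresh_inv_nrm[OF inv a] by blast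
  have vl: "v \<in> reach K l" using nrm_in_reach[OF att_K v(1)] .
  have "\<phi> a = Inr (\<psi> a)" using reach_trans[OF vl v(2)] by (simp add: \<phi>_def)
  then have "depth (restr H (\<phi> a)) = height GL (\<psi> a)"
    using depth_H_Inr depth_restr_eq_height[OF att_GL] by simp
  also have "\<dots> \<le> height GL (\<psi> v)"
    using height_reach_le[OF wf_lgraph_GL] hom_rtrancl[OF vl] v(2) by (simp add: reach_def)
  also have "\<dots> = depth (restr GL (\<psi> v))"
    by (rule depth_restr_eq_height[OF att_GL, symmetric])
  also have "\<dots> \<le> root_nrm_depth"
    unfolding root_nrm_depth_def using v(1) nrm_root_GL finite_nrm[of S GL "root GL"]
    by (intro member_le_sum) auto
  finally show ?thesis .
qed

lemma pj_fresh_le: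
  assumes inv: "fresh_inv y"
  obtains g where "prec g f_root"
    and "pj S rk lv (restr H (Inl y)) \<le> (1 + lv) ^ (2 * rk g) * (1 + lv * root_nrm_depth)"
proof -
  have y: "y \<in> reach K r" "y \<notin> reach K l" using inv by (auto simp: fresh_inv_def)
  obtain g where g: "lab K y = Some g" using fresh_labeled[OF y] by blast
  have nrm_y: "nrm S (restr H (Inl y)) (Inl y) = \<phi> ` nrm S K y"
    using nrm_restr[of "Inl y" H] nrm_eq_image[of H "Inl y" K y \<phi>] H_Inl[OF y] by simp
  have "depth (restr (restr H (Inl y)) b) \<le> root_nrm_depth" if b: "b \<in> \<phi> ` nrm S K y" for b
  proof -
    have "b \<in> set (att H (Inl y))" using b H_Inl[OF y] nrm_subset_att by fastforce
    then have "restr (restr H (Inl y)) b = restr H b"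
      by (rule restr_restr[OF att_H att_in_reach[OF att_H]])
    then show ?thesis using b depth_fresh_nrm_le[OF inv] by auto
  qed
  then have "(\<Sum>b\<in>\<phi> ` nrm S K y. depth (restr (restr H (Inl y)) b))
      \<le> card (\<phi> ` nrm S K y) * root_nrm_depth"
    using sum_bounded_above[of "\<phi> ` nrm S K y" "\<lambda>b. depth (restr (restr H (Inl y)) b)"]
    by simp
  also have "\<dots> \<le> lv * root_nrm_depth"
  proof -
    have "nrm S K y \<subseteq> reach K r"
      using reach_trans[OF y(1) nrm_in_reach[OF att_K]] by auto
    then have "card (nrm S K y) \<le> card (reach K r)"
      by (rule card_mono[OF finite_reach_r])
    then have "card (nrm S K y) \<le> lv"
      using card_rhs by simp
    then show ?thesis
      using card_image_le[OF finite_nrm, of \<phi> S K y] by (simp add: le_trans)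
  qed
  finally have "pj S rk lv (restr H (Inl y)) \<le> (1 + lv) ^ (2 * rk g) * (1 + lv * root_nrm_depth)"
    unfolding pj_def using nrm_y H_Inl[OF y] g by simp
  with that show ?thesis using rhs_lab_prec[OF y(1) g] by blast
qed

lemma fresh_sum_less:
  assumes F: "F \<subseteq> reach K r" "\<forall>y\<in>F. fresh_inv y"
  shows "(\<Sum>y\<in>F. pj S rk lv (restr H (Inl y))) < pj S rk lv (restr GL (root GL))"
proof (cases "F = {}")
  case True
  then show ?thesis by (simp add: pj_root_GL)
next
  case False
  then obtain y0 where "y0 \<in> F" by auto
  then obtain g0 where "prec g0 f_root" using pj_fresh_le F(2) by blast
  then have rk_pos: "1 \<le> rk f_root" using prec_rk by fastforce
  define P where "P = (1 + lv) ^ (2 * (rk f_root - 1))"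
  have each: "pj S rk lv (restr H (Inl y)) \<le> P * (1 + lv * root_nrm_depth)" if "y \<in> F" for y
  proof -
    obtain g where g: "prec g f_root"
      and pj: "pj S rk lv (restr H (Inl y)) \<le> (1 + lv) ^ (2 * rk g) * (1 + lv * root_nrm_depth)"
      using pj_fresh_le F(2) \<open>y \<in> F\<close> by blast
    have "(1 + lv) ^ (2 * rk g) \<le> P"
      unfolding P_def using prec_rk[OF g] by (intro power_increasing) auto
    with pj show ?thesis
      by (meson le_trans mult_right_mono zero_le)
  qed
  have "card F \<le> lv"
    using card_mono[OF finite_reach_r F(1)] card_rhs by simp
  have "(\<Sum>y\<in>F. pj S rk lv (restr H (Inl y))) \<le> card F * (P * (1 + lv * root_nrm_depth))"
    using sum_bounded_above[of F "\<lambda>y. pj S rk lv (restr H (Inl y))"] each by simp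
  also have "\<dots> \<le> lv * (P * (1 + lv * root_nrm_depth))"
    using \<open>card F \<le> lv\<close> by (rule mult_right_mono) simp
  also have "\<dots> = P * (lv * (1 + lv * root_nrm_depth))"
    by (rule mult.left_commute)
  also have "\<dots> < P * ((1 + lv) ^ 2 * (1 + root_nrm_depth))"
    unfolding P_def by (simp add: power2_eq_square algebra_simps)
  also have "\<dots> = pj S rk lv (restr GL (root GL))"
  proof -
    have "2 * rk f_root = 2 * (rk f_root - 1) + 2" using rk_pos by simp
    then have "(1 + lv) ^ (2 * rk f_root) = P * (1 + lv) ^ 2"
      unfolding P_def by (metis power_add)
    then show ?thesis
      unfolding pj_root_GL by (simp only: mult.assoc)
  qed
  finally show ?thesis .
qed

lemma fresh_inv_active: "Inl y \<in> active_nodes S (restr H (\<phi> r)) \<Longrightarrow> fresh_inv y"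
  using SP_reduct[of "Inl y"] by (simp add: active_nodes_def)

lemma shared_active:
  assumes "Inr w \<in> active_nodes S (restr H (\<phi> r))"
  shows "w \<in> active_nodes S GL - {root GL}"
proof -
  have "Inr w \<in> reach H (\<phi> r)" "shared_inv w"
    using assms SP_reduct[of "Inr w"] by (auto simp: active_nodes_def)
  moreover have "\<not> tg_C S (restr GL w)"
    using assms restr_restr[OF att_H \<open>Inr w \<in> reach H (\<phi> r)\<close>] tg_C_H_Inr
    by (simp add: active_nodes_def)
  ultimately show ?thesis by (auto simp: shared_inv_def active_nodes_def)
qed

lemma finite_active_GL: "finite (active_nodes S GL)"
proof -
  have "active_nodes S GL \<subseteq> nodes GL"
    using SP_subset_reach[of S GL "root GL"] nodes_GL by (auto simp: active_nodes_def)
  then show ?thesis using finite_nodes_GL finite_subset by blast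
qed

lemma interp_reduct_le:
  "interp S rk lv (restr H (\<phi> r))
     \<le> (\<Sum>y\<in>{y. Inl y \<in> active_nodes S (restr H (\<phi> r))}. pj S rk lv (restr H (Inl y)))
       + (\<Sum>w\<in>active_nodes S GL - {root GL}. pj S rk lv (restr GL w))"
  (is "_ \<le> (\<Sum>y\<in>?F. _) + (\<Sum>w\<in>?WL. _)")
proof -
  define A where "A = active_nodes S (restr H (\<phi> r))"
  define W where "W = {w. Inr w \<in> A}"
  have A: "restr (restr H (\<phi> r)) x = restr H x" if "x \<in> A" for x
    using that SP_reduct restr_restr[OF att_H] unfolding A_def active_nodes_def by auto
  have F_sub: "?F \<subseteq> reach K r"
    using fresh_inv_active by (auto simp: fresh_inv_def)
  have W_sub: "W \<subseteq> ?WL"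
    using shared_active unfolding W_def A_def by auto
  have fin_WL: "finite ?WL"
    using finite_active_GL by simp
  have "A = Inl ` ?F \<union> Inr ` W"
    unfolding A_def W_def by (auto intro: sum.exhaust)
  then have "interp S rk lv (restr H (\<phi> r))
      = (\<Sum>x\<in>Inl ` ?F \<union> Inr ` W. pj S rk lv (restr H x))"
    unfolding interp_eq_sum_active A_def[symmetric] using A by (simp cong: sum.cong)
  also have "\<dots> = (\<Sum>y\<in>?F. pj S rk lv (restr H (Inl y))) + (\<Sum>w\<in>W. pj S rk lv (restr GL w))"
    using finite_subset[OF F_sub finite_reach_r] finite_subset[OF W_sub fin_WL]
    by (subst sum.union_disjoint) (auto simp: sum.reindex pj_H_Inr)
  also have "(\<Sum>w\<in>W. pj S rk lv (restr GL w)) \<le> (\<Sum>w\<in>?WL. pj S rk lv (restr GL w))"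
    using fin_WL W_sub by (rule sum_mono2) simp
  finally show ?thesis by simp
qed

lemma interp_GL_eq:
  "interp S rk lv GL
     = pj S rk lv (restr GL (root GL)) + (\<Sum>w\<in>active_nodes S GL - {root GL}. pj S rk lv (restr GL w))"
proof -
  have "root GL \<in> active_nodes S GL"
    using not_tg_C_GL by (simp add: active_nodes_def SP_def)
  with finite_active_GL show ?thesis
    unfolding interp_eq_sum_active by (rule sum.remove)
qed

theorem interp_rw_root_less: "interp S rk lv (rw_root K l r \<psi> GL) < interp S rk lv GL"
proof -
  let ?F = "{y. Inl y \<in> active_nodes S (restr H (\<phi> r))}"
  have "?F \<subseteq> reach K r" "\<forall>y\<in>?F. fresh_inv y"
    using fresh_inv_active by (auto simp: fresh_inv_def)
  from fresh_sum_less[OF this] show ?thesis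
    using interp_reduct_le interp_GL_eq rw_root_eq by simp
qed

end

theorem mainTheorem3:
  fixes S :: "'f sig" and prec :: "'f \<Rightarrow> 'f \<Rightarrow> bool" and rk :: "'f \<Rightarrow> nat"
    and K :: "('v, 'f) lgraph" and l r :: 'v
    and GL :: "('w, 'f) tgraph" and \<psi> :: "'v \<Rightarrow> 'w" and lv :: nat
  assumes "wf_sig S"
    and "precedence S prec rk"
    and "constructor_rule S K l r"
    and "pt S prec (restr K r) (restr K l)"
    and "wf_tgraph S GL" and "closed GL" and "tg_nrm S GL"
    and "is_hom (restr K l) GL \<psi>"
    and "tg_nrm S (rw_root K l r \<psi> GL)"
    and "0 < lv"
    and "card (nodes (restr K r)) \<le> lv"
  shows "interp S rk lv (rw_root K l r \<psi> GL) < interp S rk lv GL"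
proof -
  interpret root_rewrite S prec rk K l r GL \<psi> lv
    using assms by unfold_locales
  show ?thesis by (rule interp_rw_root_less)
qed

end
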